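(* For every integer $n\ge2$, the Mobius ladder $M_{2n}$ admits no extended irregular dominating set.
   Context: For $n\ge2$, the Mobius ladder $M_{2n}$ has vertex set $\{x_1,\dots,x_{2n}\}$ and edge set $\{\{x_i,x_{i+1}\}:1\le i\le 2n\}\cup\{\{x_i,x_{i+n}\}:1\le i\le n\}$, subscripts modulo $2n$. In a finite simple graph $\Gamma=(V,E)$ with distance $d$, a vertex $v$ carrying a non-negative integer label $\ell$ dominates (covers) exactly the vertices $u$ with $d(u,v)=\ell$; a vertex labeled $0$ dominates only itself. An extended irregular dominating set is a set $S\subseteq V$ with a labeling $\lambda:S\to\mathbb{Z}_{\ge0}$ with distinct labels on distinct vertices, such that every vertex of $V$ is dominated by some vertex of $S$; it is assumed that some vertex of $S$ has label $0$. *)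

theory Defs
  imports Main
begin

text \<open>A finite simple graph is given by a vertex set V and a symmetric irreflexive
adjacency relation adj (only its restriction to V matters).\<close>

inductive walk :: "('a \<Rightarrow> 'a \<Rightarrow> bool) \<Rightarrow> 'a set \<Rightarrow> 'a \<Rightarrow> 'a \<Rightarrow> nat \<Rightarrow> bool"
  for adj V where
  walk0: "u \<in> V \<Longrightarrow> walk adj V u u 0"
| walkS: "walk adj V u w k \<Longrightarrow> v \<in> V \<Longrightarrow> adj w v \<Longrightarrow> walk adj V u v (Suc k)"

definition graph_dist_eq :: "('a \<Rightarrow> 'a \<Rightarrow> bool) \<Rightarrow> 'a set \<Rightarrow> 'a \<Rightarrow> 'a \<Rightarrow> nat \<Rightarrow> bool" where
  "graph_dist_eq adj V u v k \<longleftrightarrow> walk adj V u v k \<and> (\<forall>j<k. \<not> walk adj V u v j)"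

definition ext_irr_dom_set ::
  "('a \<Rightarrow> 'a \<Rightarrow> bool) \<Rightarrow> 'a set \<Rightarrow> 'a set \<Rightarrow> ('a \<Rightarrow> nat) \<Rightarrow> bool" where
  "ext_irr_dom_set adj V S lam \<longleftrightarrow>
     S \<subseteq> V \<and> inj_on lam S \<and> (\<exists>s\<in>S. lam s = 0) \<and>
     (\<forall>u\<in>V. \<exists>v\<in>S. graph_dist_eq adj V u v (lam v))"

text \<open>Mobius ladder M_{2n}: vertices x_1..x_{2n} encoded as 0..2n-1 (x_i = i-1);
edges {i,i+1 mod 2n} and {i, i+n}.\<close>
definition mobius_V :: "nat \<Rightarrow> nat set" where
  "mobius_V n = {0..<2*n}"

definition mobius_adj :: "nat \<Rightarrow> nat \<Rightarrow> nat \<Rightarrow> bool" where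
  "mobius_adj n i j \<longleftrightarrow> i \<in> {0..<2*n} \<and> j \<in> {0..<2*n} \<and>
     (j = (i + 1) mod (2*n) \<or> i = (j + 1) mod (2*n) \<or> j = i + n \<or> i = j + n)"

end

theory Submission
  imports Defs
begin

text \<open>
  Identify the vertices of \<open>M\<^sub>2\<^sub>n\<close> with \<open>\<int>/2n\<close>; the graph is then the Cayley graph
  with generators \<open>\<plusminus>1\<close> and \<open>n\<close>, so the distance from \<open>u\<close> to \<open>v\<close> depends only on the
  offset \<open>z = v - u\<close>, and the sphere of radius \<open>l\<close> has the same size \<open>s\<^sub>l\<close> around every vertex,
  with \<open>\<Sum> s\<^sub>l = 2n\<close>. Since the labels are distinct, the spheres \<open>S(v, \<lambda> v)\<close> have total
  size at most \<open>2n\<close>; as they cover the vertex set, they are pairwise disjoint and every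
  distance that occurs in the graph is a label. In particular some \<open>w\<close> carries the label
  \<open>d(0, n - 1)\<close>, which is 1 for \<open>n = 2\<close> and 2 otherwise. The vertex \<open>u\<close> dominating \<open>w\<close> is not
  \<open>w\<close> itself. For \<open>n = 2\<close> (the graph \<open>K\<^sub>4\<close>) this forces \<open>\<lambda> u = 1 = \<lambda> w\<close>. For \<open>n \<ge> 3\<close>, one of
  the two vertices \<open>w \<plusminus> 1 + n\<close> lies at distance 2 from \<open>w\<close> and at distance \<open>d(w, u)\<close> from \<open>u\<close>,
  so the spheres around \<open>w\<close> and \<open>u\<close> overlap.
\<close>

lemma walk_in_vertices: "walk adj V u v k \<Longrightarrow> u \<in> V \<and> v \<in> V"
  by (induction rule: walk.induct) auto

lemma graph_dist_eq_iff_potential: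
  fixes \<delta> :: "'a \<Rightarrow> nat"
  assumes "u \<in> V" "v \<in> V"
    and zero: "\<And>x. x \<in> V \<Longrightarrow> \<delta> x = 0 \<longleftrightarrow> x = u"
    and step: "\<And>x y. x \<in> V \<Longrightarrow> y \<in> V \<Longrightarrow> adj x y \<Longrightarrow> \<delta> y \<le> \<delta> x + 1"
    and descent: "\<And>y k. y \<in> V \<Longrightarrow> \<delta> y = Suc k \<Longrightarrow> \<exists>x\<in>V. adj x y \<and> \<delta> x = k"
  shows "graph_dist_eq adj V u v k \<longleftrightarrow> k = \<delta> v"
proof -
  have lower: "x = u \<longrightarrow> \<delta> y \<le> j" if "walk adj V x y j" for x y j
    using that
  proof (induction rule: walk.induct)
    case (walk0 x)
    then show ?case using zero by auto
  next
    case (walkS x w j y)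
    have "w \<in> V"
      using walk_in_vertices[OF walkS.hyps(1)] by blast
    then have "\<delta> y \<le> \<delta> w + 1"
      using step walkS.hyps(2,3) by blast
    then show ?case
      using walkS.IH by auto
  qed
  have upper: "walk adj V u y (\<delta> y)" if "y \<in> V" for y
  proof -
    have "\<forall>y\<in>V. \<delta> y = j \<longrightarrow> walk adj V u y j" for j
    proof (induction j)
      case 0
      show ?case
        using zero \<open>u \<in> V\<close> by (auto intro: walk0)
    next
      case (Suc j)
      show ?case
      proof (intro ballI impI)
        fix y assume "y \<in> V" "\<delta> y = Suc j"
        then obtain x where "x \<in> V" "adj x y" "\<delta> x = j"
          using descent by blast
        then show "walk adj V u y (Suc j)"
          using Suc.IH \<open>y \<in> V\<close> by (blast intro: walkS)
      qed
    qed
    then show ?thesis using that by blast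
  qed
  show ?thesis
  proof
    assume "graph_dist_eq adj V u v k"
    then have "walk adj V u v k" and shortest: "\<forall>j<k. \<not> walk adj V u v j"
      unfolding graph_dist_eq_def by auto
    then have "\<delta> v \<le> k"
      using lower by blast
    moreover have "\<not> \<delta> v < k"
      using shortest upper[OF \<open>v \<in> V\<close>] by blast
    ultimately show "k = \<delta> v"
      by simp
  next
    assume k: "k = \<delta> v"
    have "\<not> walk adj V u v j" if "j < k" for j
      using lower[of u v j] that k by auto
    then show "graph_dist_eq adj V u v k"
      unfolding graph_dist_eq_def using k upper[OF \<open>v \<in> V\<close>] by blast
  qed
qed

lemma card_UN_less_sum:
  assumes "finite S" "\<And>v. v \<in> S \<Longrightarrow> finite (A v)"
    and "u \<in> S" "w \<in> S" "u \<noteq> w" "p \<in> A u" "p \<in> A w"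
  shows "card (\<Union>v\<in>S. A v) < (\<Sum>v\<in>S. card (A v))"
proof -
  define R where "R = (\<Union>v\<in>S - {w}. A v)"
  have "finite R" "finite (A w)"
    using assms unfolding R_def by auto
  moreover have "p \<in> A w \<inter> R"
    using assms unfolding R_def by auto
  ultimately have "card (A w \<inter> R) > 0"
    by (auto simp: card_gt_0_iff)
  then have "card (A w \<union> R) < card (A w) + card R"
    using card_Un_Int[OF \<open>finite (A w)\<close> \<open>finite R\<close>] by linarith
  moreover have "card R \<le> (\<Sum>v\<in>S - {w}. card (A v))"
    unfolding R_def using assms by (intro card_UN_le) auto
  moreover have "(\<Union>v\<in>S. A v) = A w \<union> R"
    using \<open>w \<in> S\<close> unfolding R_def by auto
  moreover have "(\<Sum>v\<in>S. card (A v)) = card (A w) + (\<Sum>v\<in>S - {w}. card (A v))"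
    using sum.remove[OF \<open>finite S\<close> \<open>w \<in> S\<close>] .
  ultimately show ?thesis
    by simp
qed

definition ladder_succ :: "nat \<Rightarrow> nat \<Rightarrow> nat" where
  "ladder_succ n x = (if x + 1 = 2*n then 0 else x + 1)"

definition ladder_pred :: "nat \<Rightarrow> nat \<Rightarrow> nat" where
  "ladder_pred n x = (if x = 0 then 2*n - 1 else x - 1)"

definition ladder_rung :: "nat \<Rightarrow> nat \<Rightarrow> nat" where
  "ladder_rung n x = (if x < n then x + n else x - n)"

definition ladder_offset :: "nat \<Rightarrow> nat \<Rightarrow> nat \<Rightarrow> nat" where
  "ladder_offset n u v = (if u \<le> v then v - u else v + 2*n - u)"

text \<open>For \<open>z \<le> n\<close> the two candidate routes from 0 to \<open>z\<close> run along the rim (\<open>z\<close> steps) or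
  across the rung at 0 and back along the rim (\<open>1 + n - z\<close> steps); symmetrically for \<open>z > n\<close>.\<close>

definition ladder_norm :: "nat \<Rightarrow> nat \<Rightarrow> nat" where
  "ladder_norm n z = (if z \<le> n then min z (n + 1 - z) else min (2*n - z) (z + 1 - n))"

definition ladder_dist :: "nat \<Rightarrow> nat \<Rightarrow> nat \<Rightarrow> nat" where
  "ladder_dist n u v = ladder_norm n (ladder_offset n u v)"

lemma mod_eq_ladder_succ: "x < 2*n \<Longrightarrow> (x + 1) mod (2*n) = ladder_succ n x"
  unfolding ladder_succ_def by (auto simp: mod_if)

lemma ladder_succ_less: "x < 2*n \<Longrightarrow> ladder_succ n x < 2*n"
  unfolding ladder_succ_def by auto

lemma ladder_pred_less: "x < 2*n \<Longrightarrow> ladder_pred n x < 2*n"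
  unfolding ladder_pred_def by auto

lemma ladder_rung_less: "x < 2*n \<Longrightarrow> ladder_rung n x < 2*n"
  unfolding ladder_rung_def by auto

lemma ladder_succ_eq_iff: "x < 2*n \<Longrightarrow> y < 2*n \<Longrightarrow> x = ladder_succ n y \<longleftrightarrow> y = ladder_pred n x"
  unfolding ladder_succ_def ladder_pred_def by auto

lemma ladder_rung_eq_iff: "x < 2*n \<Longrightarrow> y < 2*n \<Longrightarrow> y = x + n \<or> x = y + n \<longleftrightarrow> y = ladder_rung n x"
  unfolding ladder_rung_def by auto

lemma mobius_adj_iff:
  "mobius_adj n x y \<longleftrightarrow>
     x < 2*n \<and> (y = ladder_succ n x \<or> y = ladder_pred n x \<or> y = ladder_rung n x)"
  unfolding mobius_adj_def atLeastLessThan_iff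
  using mod_eq_ladder_succ[of x n] mod_eq_ladder_succ[of y n] ladder_succ_eq_iff[of x n y]
    ladder_rung_eq_iff[of x n y] ladder_succ_less[of x n] ladder_pred_less[of x n] ladder_rung_less[of x n]
  by auto

lemma mobius_adj_commute: "mobius_adj n x y \<longleftrightarrow> mobius_adj n y x"
  unfolding mobius_adj_def by auto

lemma ladder_offset_less: "u < 2*n \<Longrightarrow> v < 2*n \<Longrightarrow> ladder_offset n u v < 2*n"
  unfolding ladder_offset_def by auto

lemma ladder_offset_self [simp]: "ladder_offset n u u = 0"
  unfolding ladder_offset_def by simp

lemma ladder_offset_eq_0_iff:
  "u < 2*n \<Longrightarrow> v < 2*n \<Longrightarrow> ladder_offset n u v = 0 \<longleftrightarrow> v = u"
  unfolding ladder_offset_def by auto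

lemma ladder_offset_inj:
  "u < 2*n \<Longrightarrow> u' < 2*n \<Longrightarrow> v < 2*n \<Longrightarrow> ladder_offset n u v = ladder_offset n u' v \<Longrightarrow> u = u'"
  unfolding ladder_offset_def by (auto split: if_splits)

lemma ladder_offset_surj:
  assumes "z < 2*n" "v < 2*n"
  obtains u where "u < 2*n" "ladder_offset n u v = z"
proof (rule that)
  show "(if z \<le> v then v - z else v + 2*n - z) < 2*n"
    using assms by auto
  show "ladder_offset n (if z \<le> v then v - z else v + 2*n - z) v = z"
    using assms unfolding ladder_offset_def by auto
qed

context
  fixes n u w :: nat
  assumes "u < 2*n" "w < 2*n"
begin

lemma ladder_offset_succ [simp]:
  "ladder_offset n u (ladder_succ n w) = ladder_succ n (ladder_offset n u w)"
  using \<open>u < 2*n\<close> \<open>w < 2*n\<close> unfolding ladder_offset_def ladder_succ_def by auto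

lemma ladder_offset_pred [simp]:
  "ladder_offset n u (ladder_pred n w) = ladder_pred n (ladder_offset n u w)"
  using \<open>u < 2*n\<close> \<open>w < 2*n\<close> unfolding ladder_offset_def ladder_pred_def by auto

lemma ladder_offset_rung [simp]:
  "ladder_offset n u (ladder_rung n w) = ladder_rung n (ladder_offset n u w)"
  using \<open>u < 2*n\<close> \<open>w < 2*n\<close> unfolding ladder_offset_def ladder_rung_def by auto

lemma ladder_offset_succ_left [simp]:
  "ladder_offset n (ladder_succ n w) u = ladder_pred n (ladder_offset n w u)"
  using \<open>u < 2*n\<close> \<open>w < 2*n\<close> unfolding ladder_offset_def ladder_succ_def ladder_pred_def by auto

lemma ladder_offset_pred_left [simp]:
  "ladder_offset n (ladder_pred n w) u = ladder_succ n (ladder_offset n w u)"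
  using \<open>u < 2*n\<close> \<open>w < 2*n\<close> unfolding ladder_offset_def ladder_succ_def ladder_pred_def by auto

lemma ladder_offset_rung_left [simp]:
  "ladder_offset n (ladder_rung n w) u = ladder_rung n (ladder_offset n w u)"
  using \<open>u < 2*n\<close> \<open>w < 2*n\<close> unfolding ladder_offset_def ladder_rung_def by auto

end

lemma ladder_norm_eq_0_iff: "z < 2*n \<Longrightarrow> ladder_norm n z = 0 \<longleftrightarrow> z = 0"
  unfolding ladder_norm_def by auto

lemma ladder_norm_2_le_1: "z < 4 \<Longrightarrow> ladder_norm 2 z \<le> 1"
  unfolding ladder_norm_def by auto

lemma ladder_norm_succ_le: "z < 2*n \<Longrightarrow> ladder_norm n (ladder_succ n z) \<le> ladder_norm n z + 1"
  unfolding ladder_norm_def ladder_succ_def by auto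

lemma ladder_norm_pred_le: "z < 2*n \<Longrightarrow> ladder_norm n (ladder_pred n z) \<le> ladder_norm n z + 1"
  unfolding ladder_norm_def ladder_pred_def by auto

lemma ladder_norm_rung_le: "z < 2*n \<Longrightarrow> ladder_norm n (ladder_rung n z) \<le> ladder_norm n z + 1"
  unfolding ladder_norm_def ladder_rung_def by auto

lemma ladder_norm_descent:
  assumes "z < 2*n" "ladder_norm n z = Suc k"
  shows "ladder_norm n (ladder_pred n z) = k \<or> ladder_norm n (ladder_succ n z) = k \<or>
         ladder_norm n (ladder_rung n z) = k"
proof -
  consider "z \<le> n" "2*z \<le> n + 1" | "n < z" "2*(2*n - z) \<le> n + 1"
    | "z \<le> n" "n + 1 < 2*z" | "n < z" "n + 1 < 2*(2*n - z)"
    by linarith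
  then show ?thesis
  proof cases
    case 1
    then have "ladder_norm n (ladder_pred n z) = k"
      using assms unfolding ladder_norm_def ladder_pred_def by auto
    then show ?thesis ..
  next
    case 2
    then have "ladder_norm n (ladder_succ n z) = k"
      using assms unfolding ladder_norm_def ladder_succ_def by auto
    then show ?thesis by blast
  next
    case 3
    then have "ladder_norm n (ladder_rung n z) = k"
      using assms unfolding ladder_norm_def ladder_rung_def by auto
    then show ?thesis by blast
  next
    case 4
    then have "ladder_norm n (ladder_rung n z) = k"
      using assms unfolding ladder_norm_def ladder_rung_def by auto
    then show ?thesis by blast
  qed
qed

lemma ladder_norm_partner:
  assumes "z < 2*n" "0 < z"
  shows "ladder_norm n (ladder_rung n (ladder_pred n z)) = ladder_norm n z \<or>
         ladder_norm n (ladder_rung n (ladder_succ n z)) = ladder_norm n z"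
proof (cases "z \<le> n")
  case True
  then have "ladder_norm n (ladder_rung n (ladder_pred n z)) = ladder_norm n z"
    using assms unfolding ladder_norm_def ladder_pred_def ladder_rung_def by auto
  then show ?thesis ..
next
  case False
  then have "ladder_norm n (ladder_rung n (ladder_succ n z)) = ladder_norm n z"
    using assms unfolding ladder_norm_def ladder_succ_def ladder_rung_def by auto
  then show ?thesis ..
qed

lemma ladder_dist_self [simp]: "ladder_dist n u u = 0"
  by (simp add: ladder_dist_def ladder_norm_def)

lemma ladder_dist_eq_0_iff: "u < 2*n \<Longrightarrow> v < 2*n \<Longrightarrow> ladder_dist n u v = 0 \<longleftrightarrow> v = u"
  unfolding ladder_dist_def
  by (simp add: ladder_norm_eq_0_iff ladder_offset_less ladder_offset_eq_0_iff)

lemma mobius_graph_dist_eq_iff: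
  assumes "u < 2*n" "v < 2*n"
  shows "graph_dist_eq (mobius_adj n) (mobius_V n) u v k \<longleftrightarrow> k = ladder_dist n u v"
proof (rule graph_dist_eq_iff_potential)
  show "ladder_dist n u y \<le> ladder_dist n u x + 1"
    if "x \<in> mobius_V n" "y \<in> mobius_V n" "mobius_adj n x y" for x y
  proof -
    have x: "x < 2*n" and y: "y = ladder_succ n x \<or> y = ladder_pred n x \<or> y = ladder_rung n x"
      using that unfolding mobius_adj_iff by auto
    have z: "ladder_offset n u x < 2*n"
      using ladder_offset_less[OF \<open>u < 2*n\<close> x] .
    from y show ?thesis
      using \<open>u < 2*n\<close> x ladder_norm_succ_le[OF z] ladder_norm_pred_le[OF z] ladder_norm_rung_le[OF z]
      unfolding ladder_dist_def by auto
  qed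
  show "\<exists>x\<in>mobius_V n. mobius_adj n x y \<and> ladder_dist n u x = k"
    if y_vertex: "y \<in> mobius_V n" and dist_y: "ladder_dist n u y = Suc k" for y k
  proof -
    have y: "y < 2*n"
      using y_vertex unfolding mobius_V_def by simp
    have "ladder_dist n u (ladder_pred n y) = k \<or> ladder_dist n u (ladder_succ n y) = k \<or>
        ladder_dist n u (ladder_rung n y) = k"
      using ladder_norm_descent[OF ladder_offset_less[OF \<open>u < 2*n\<close> y]] dist_y \<open>u < 2*n\<close> y
      unfolding ladder_dist_def by simp
    then obtain x where x: "x = ladder_pred n y \<or> x = ladder_succ n y \<or> x = ladder_rung n y"
      and "ladder_dist n u x = k"
      by blast
    moreover have "mobius_adj n y x"
      using x y unfolding mobius_adj_iff by auto
    moreover have "x < 2*n"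
      using x y by (auto intro: ladder_succ_less ladder_pred_less ladder_rung_less)
    ultimately show ?thesis
      unfolding mobius_V_def by (auto simp: mobius_adj_commute[of n y x])
  qed
qed (use assms in \<open>auto simp: mobius_V_def ladder_dist_eq_0_iff\<close>)

definition ladder_sphere :: "nat \<Rightarrow> nat \<Rightarrow> nat \<Rightarrow> nat set" where
  "ladder_sphere n v l = {u \<in> {0..<2*n}. ladder_dist n u v = l}"

lemma card_ladder_sphere:
  assumes "v < 2*n"
  shows "card (ladder_sphere n v l) = card {z \<in> {0..<2*n}. ladder_norm n z = l}"
proof -
  have "inj_on (\<lambda>u. ladder_offset n u v) (ladder_sphere n v l)"
    using ladder_offset_inj assms unfolding ladder_sphere_def inj_on_def by auto
  moreover have "(\<lambda>u. ladder_offset n u v) ` ladder_sphere n v l = {z \<in> {0..<2*n}. ladder_norm n z = l}"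
  proof
    show "(\<lambda>u. ladder_offset n u v) ` ladder_sphere n v l \<subseteq> {z \<in> {0..<2*n}. ladder_norm n z = l}"
      using assms ladder_offset_less unfolding ladder_sphere_def ladder_dist_def by auto
  next
    show "{z \<in> {0..<2*n}. ladder_norm n z = l} \<subseteq> (\<lambda>u. ladder_offset n u v) ` ladder_sphere n v l"
    proof
      fix z assume z: "z \<in> {z \<in> {0..<2*n}. ladder_norm n z = l}"
      then obtain u where "u < 2*n" "ladder_offset n u v = z"
        using ladder_offset_surj[OF _ assms] by auto
      then show "z \<in> (\<lambda>u. ladder_offset n u v) ` ladder_sphere n v l"
        using z unfolding ladder_sphere_def ladder_dist_def by auto
    qed
  qed
  ultimately show ?thesis
    by (metis card_image)
qed

lemma sum_card_ladder_spheres: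
  assumes "S \<subseteq> {0..<2*n}" "inj_on lam S"
  shows "(\<Sum>v\<in>S. card (ladder_sphere n v (lam v))) =
    card {z \<in> {0..<2*n}. ladder_norm n z \<in> lam ` S}"
proof -
  define level where "level l = {z \<in> {0..<2*n}. ladder_norm n z = l}" for l
  have "finite S"
    using assms(1) finite_subset by blast
  have "(\<Sum>v\<in>S. card (ladder_sphere n v (lam v))) = (\<Sum>v\<in>S. card (level (lam v)))"
    using assms(1) card_ladder_sphere unfolding level_def by (intro sum.cong) auto
  also have "\<dots> = (\<Sum>l\<in>lam ` S. card (level l))"
    using sum.reindex[OF assms(2), of "\<lambda>l. card (level l)"] by simp
  also have "\<dots> = card (\<Union>l\<in>lam ` S. level l)"
    using \<open>finite S\<close> by (intro card_UN_disjoint[symmetric]) (auto simp: level_def)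
  also have "(\<Union>l\<in>lam ` S. level l) = {z \<in> {0..<2*n}. ladder_norm n z \<in> lam ` S}"
    unfolding level_def by auto
  finally show ?thesis .
qed

lemma dominating_ladder_spheres:
  assumes "S \<subseteq> {0..<2*n}" "inj_on lam S"
    and dominated: "\<And>u. u < 2*n \<Longrightarrow> \<exists>v\<in>S. ladder_dist n u v = lam v"
  shows "card (\<Union>v\<in>S. ladder_sphere n v (lam v)) = (\<Sum>v\<in>S. card (ladder_sphere n v (lam v)))"
    and "z < 2*n \<Longrightarrow> ladder_norm n z \<in> lam ` S"
proof -
  let ?labelled = "{z \<in> {0..<2*n}. ladder_norm n z \<in> lam ` S}"
  have "finite S"
    using assms(1) finite_subset by blast
  have "(\<Union>v\<in>S. ladder_sphere n v (lam v)) = {0..<2*n}"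
  proof
    show "(\<Union>v\<in>S. ladder_sphere n v (lam v)) \<subseteq> {0..<2*n}"
      unfolding ladder_sphere_def by blast
    show "{0..<2*n} \<subseteq> (\<Union>v\<in>S. ladder_sphere n v (lam v))"
    proof
      fix u assume "u \<in> {0..<2*n}"
      then obtain v where "v \<in> S" "ladder_dist n u v = lam v"
        using dominated by auto
      then show "u \<in> (\<Union>v\<in>S. ladder_sphere n v (lam v))"
        using \<open>u \<in> {0..<2*n}\<close> unfolding ladder_sphere_def by blast
    qed
  qed
  then have covered: "card (\<Union>v\<in>S. ladder_sphere n v (lam v)) = 2*n"
    by simp
  have "card (\<Union>v\<in>S. ladder_sphere n v (lam v)) \<le> (\<Sum>v\<in>S. card (ladder_sphere n v (lam v)))"
    using \<open>finite S\<close> by (rule card_UN_le)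
  moreover have "(\<Sum>v\<in>S. card (ladder_sphere n v (lam v))) = card ?labelled"
    using sum_card_ladder_spheres[OF assms(1,2)] .
  moreover have "card ?labelled \<le> 2*n"
    using card_mono[of "{0..<2*n}" ?labelled] by (simp add: subset_eq)
  ultimately have tight: "card (\<Union>v\<in>S. ladder_sphere n v (lam v)) = (\<Sum>v\<in>S. card (ladder_sphere n v (lam v)))"
    "card ?labelled = 2*n"
    using covered by linarith+
  then show "card (\<Union>v\<in>S. ladder_sphere n v (lam v)) = (\<Sum>v\<in>S. card (ladder_sphere n v (lam v)))"
    by blast
  have "?labelled = {0..<2*n}"
    using tight(2) by (intro card_subset_eq) (auto simp: subset_eq)
  then have "z \<in> ?labelled" if "z < 2*n"
    using that by simp
  then show "ladder_norm n z \<in> lam ` S" if "z < 2*n"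
    using that by simp
qed

lemma ladder_dist_partner:
  assumes "n \<ge> 3" "w < 2*n" "u < 2*n" "u \<noteq> w"
  obtains p where "p < 2*n" "ladder_dist n p w = 2" "ladder_dist n p u = ladder_dist n w u"
proof -
  let ?z = "ladder_offset n w u"
  have "?z < 2*n" "0 < ?z"
    using ladder_offset_less[OF assms(2,3)] ladder_offset_eq_0_iff[OF assms(2,3)] assms(4) by auto
  from ladder_norm_partner[OF this] show ?thesis
  proof
    assume "ladder_norm n (ladder_rung n (ladder_pred n ?z)) = ladder_norm n ?z"
    moreover have "ladder_norm n (ladder_rung n (ladder_pred n 0)) = 2"
      using assms(1) by (simp add: ladder_norm_def ladder_pred_def ladder_rung_def)
    ultimately show ?thesis
      using that[of "ladder_rung n (ladder_succ n w)"] assms(2,3)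
      by (simp add: ladder_dist_def ladder_succ_less ladder_rung_less)
  next
    assume "ladder_norm n (ladder_rung n (ladder_succ n ?z)) = ladder_norm n ?z"
    moreover have "ladder_norm n (ladder_rung n (ladder_succ n 0)) = 2"
      using assms(1) by (simp add: ladder_norm_def ladder_succ_def ladder_rung_def)
    ultimately show ?thesis
      using that[of "ladder_rung n (ladder_pred n w)"] assms(2,3)
      by (simp add: ladder_dist_def ladder_pred_less ladder_rung_less)
  qed
qed

lemma no_dominating_injective_ladder_labelling:
  assumes "n \<ge> 2" "S \<subseteq> {0..<2*n}" "inj_on lam S"
    and dominated: "\<And>u. u < 2*n \<Longrightarrow> \<exists>v\<in>S. ladder_dist n u v = lam v"
  shows False
proof -
  note spheres = dominating_ladder_spheres[OF assms(2,3) dominated]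
  obtain w where "w \<in> S" and lam_w: "lam w = ladder_norm n (n - 1)"
    using spheres(2)[of "n - 1"] assms(1) by force
  then have "w < 2*n"
    using assms(2) by auto
  then obtain u where "u \<in> S" and lam_u: "lam u = ladder_dist n w u"
    using dominated by metis
  then have "u < 2*n"
    using assms(2) by auto
  have "lam w \<noteq> 0"
    using lam_w assms(1) by (simp add: ladder_norm_eq_0_iff)
  then have "u \<noteq> w"
    using lam_u by auto
  show False
  proof (cases "n = 2")
    case True
    then have "lam u = 1" "lam w = 1"
      using lam_u lam_w ladder_norm_2_le_1[of "ladder_offset 2 w u"] ladder_offset_less[of w 2 u]
        ladder_dist_eq_0_iff[of w 2 u] \<open>u \<noteq> w\<close> \<open>w < 2*n\<close> \<open>u < 2*n\<close>
      by (auto simp: ladder_dist_def ladder_norm_def)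
    then show False
      using \<open>u \<noteq> w\<close> \<open>u \<in> S\<close> \<open>w \<in> S\<close> assms(3) by (metis inj_onD)
  next
    case False
    then have "n \<ge> 3" "lam w = 2"
      using assms(1) lam_w by (auto simp: ladder_norm_def)
    then obtain p where "p < 2*n" "ladder_dist n p w = lam w" "ladder_dist n p u = lam u"
      using ladder_dist_partner \<open>w < 2*n\<close> \<open>u < 2*n\<close> \<open>u \<noteq> w\<close> lam_u by metis
    then have "card (\<Union>v\<in>S. ladder_sphere n v (lam v)) < (\<Sum>v\<in>S. card (ladder_sphere n v (lam v)))"
      using assms(2) \<open>u \<in> S\<close> \<open>w \<in> S\<close> \<open>u \<noteq> w\<close> finite_subset
      by (intro card_UN_less_sum[of S _ u w p]) (auto simp: ladder_sphere_def)
    then show False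
      using spheres(1) by simp
  qed
qed

theorem theorem3p6:
  fixes n :: nat
  assumes "n \<ge> 2"
  shows "\<not> (\<exists>S lam. ext_irr_dom_set (mobius_adj n) (mobius_V n) S lam)"
proof
  assume "\<exists>S lam. ext_irr_dom_set (mobius_adj n) (mobius_V n) S lam"
  then obtain S lam where "S \<subseteq> mobius_V n" "inj_on lam S"
    and dominated: "\<forall>u\<in>mobius_V n. \<exists>v\<in>S. graph_dist_eq (mobius_adj n) (mobius_V n) u v (lam v)"
    unfolding ext_irr_dom_set_def by blast
  have S: "S \<subseteq> {0..<2*n}"
    using \<open>S \<subseteq> mobius_V n\<close> unfolding mobius_V_def .
  have "\<exists>v\<in>S. ladder_dist n u v = lam v" if "u < 2*n" for u
  proof -
    have "u \<in> mobius_V n"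
      using that unfolding mobius_V_def by simp
    then obtain v where "v \<in> S" "graph_dist_eq (mobius_adj n) (mobius_V n) u v (lam v)"
      using dominated by blast
    then show ?thesis
      using mobius_graph_dist_eq_iff[OF that] S by force
  qed
  then show False
    using no_dominating_injective_ladder_labelling[OF assms S \<open>inj_on lam S\<close>] by blast
qed

end
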